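(* Let $p\in\mathbb R_3[u_1,u_2]$ be a non-zero polynomial of the form $p=\lambda_1 u_1^3 + \lambda_2(u_1^2u_2+u_2^3)+\lambda_3 u_1u_2^2$ with $\lambda_1,\lambda_2,\lambda_3\in\mathbb R$. Then the affine line \[ \left\{\tfrac13u_1^3-u_1u_2^2+sp\mid s\in\mathbb R\right\} \] contains at least one polynomial with a root of multiplicity greater than one, equivalently with vanishing discriminant.
   Context: $\mathbb R_3[u_1,u_2]$ is the space of real homogeneous cubic polynomials in $u_1,u_2$; roots are understood projectively (linear factors over $\mathbb C$), and the discriminant of $q=q_1u_1^3+q_2u_1^2u_2+q_3u_1u_2^2+q_4u_2^3$ is $\Delta(q)=q_2^2q_3^2-4q_1q_3^3-4q_2^3q_4+18q_1q_2q_3q_4-27q_1^2q_4^2$. *)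

theory Defs
  imports Complex_Main
begin

text \<open>A binary cubic form q1 u1^3 + q2 u1^2 u2 + q3 u1 u2^2 + q4 u2^3 in R_3[u1,u2]
  is represented by its coefficient vector (q1, q2, q3, q4).\<close>

type_synonym bcubic = "real \<times> real \<times> real \<times> real"

definition cubic_disc :: "bcubic \<Rightarrow> real" where
  "cubic_disc q = (case q of (q1, q2, q3, q4) \<Rightarrow>
     q2^2 * q3^2 - 4 * q1 * q3^3 - 4 * q2^3 * q4 + 18 * q1 * q2 * q3 * q4 - 27 * q1^2 * q4^2)"

definition cadd :: "bcubic \<Rightarrow> bcubic \<Rightarrow> bcubic" where
  "cadd p q = (case p of (p1, p2, p3, p4) \<Rightarrow> case q of (q1, q2, q3, q4) \<Rightarrow>
     (p1 + q1, p2 + q2, p3 + q3, p4 + q4))"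

definition cscale :: "real \<Rightarrow> bcubic \<Rightarrow> bcubic" where
  "cscale s q = (case q of (q1, q2, q3, q4) \<Rightarrow> (s * q1, s * q2, s * q3, s * q4))"

end

theory Submission
  imports Defs "HOL-Computational_Algebra.Polynomial"
begin

text \<open>A cubic form has a double root at a point (t : 1) iff its dehomogenisation q(t, 1) and
  the derivative of the latter vanish at t. Along the pencil f + s p such an s exists whenever
  the Wronskian f(t) p'(t) - f'(t) p(t) vanishes at a point where p and p' do not both vanish.
  For the pencil of the theorem the Wronskian is a quartic whose leading and constant
  coefficients are -l2/3 and l2, so for l2 \<noteq> 0 it has a positive and a negative root;
  p cannot have a double root at both, since a nonzero cubic has at most one double root.
  For l2 = 0 a suitable member of the pencil has a vanishing leading or constant coefficient
  and is divisible by u1^2 or u2^2.\<close>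

definition cubic_eval :: "bcubic \<Rightarrow> real \<Rightarrow> real" where
  "cubic_eval q t = (case q of (q1, q2, q3, q4) \<Rightarrow> q1 * t^3 + q2 * t^2 + q3 * t + q4)"

definition cubic_deriv :: "bcubic \<Rightarrow> real \<Rightarrow> real" where
  "cubic_deriv q t = (case q of (q1, q2, q3, q4) \<Rightarrow> 3 * q1 * t^2 + 2 * q2 * t + q3)"

definition cubic_wronskian :: "bcubic \<Rightarrow> bcubic \<Rightarrow> real \<Rightarrow> real" where
  "cubic_wronskian f p t = cubic_eval f t * cubic_deriv p t - cubic_deriv f t * cubic_eval p t"

lemma cubic_eval_cadd_cscale:
  "cubic_eval (cadd f (cscale s p)) t = cubic_eval f t + s * cubic_eval p t"
  by (cases f; cases p) (simp add: cubic_eval_def cadd_def cscale_def algebra_simps)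

lemma cubic_deriv_cadd_cscale:
  "cubic_deriv (cadd f (cscale s p)) t = cubic_deriv f t + s * cubic_deriv p t"
  by (cases f; cases p) (simp add: cubic_deriv_def cadd_def cscale_def algebra_simps)

lemma cubic_disc_eq_0_if_double_root:
  assumes "cubic_eval q t = 0" and "cubic_deriv q t = 0"
  shows "cubic_disc q = 0"
proof (cases q)
  case (fields q1 q2 q3 q4)
  have q3: "q3 = - 3 * q1 * t^2 - 2 * q2 * t"
    using assms(2) by (simp add: fields cubic_deriv_def)
  have q4: "q4 = 2 * q1 * t^3 + q2 * t^2"
    using assms(1)
    by (simp add: fields cubic_eval_def q3 power2_eq_square power3_eq_cube algebra_simps)
  show ?thesis
    by (simp add: fields cubic_disc_def q3 q4 power2_eq_square power3_eq_cube algebra_simps)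
qed

lemma cubic_eq_0_if_two_double_roots:
  assumes "cubic_eval q a = 0" "cubic_deriv q a = 0" "cubic_eval q b = 0" "cubic_deriv q b = 0"
    and "a \<noteq> b"
  shows "q = (0, 0, 0, 0)"
proof (cases q)
  case (fields q1 q2 q3 q4)
  have ab: "a - b \<noteq> 0" using assms(5) by simp
  have "(a - b) * (3 * q1 * (a + b) + 2 * q2) = 0"
    using assms(2,4) by (simp add: fields cubic_deriv_def power2_eq_square algebra_simps)
  then have sum: "3 * q1 * (a + b) + 2 * q2 = 0" using ab by simp
  have "(a - b) * (q1 * (a^2 + a * b + b^2) + q2 * (a + b) + q3) = 0"
    using assms(1,3)
    by (simp add: fields cubic_eval_def power2_eq_square power3_eq_cube algebra_simps)
  then have chord: "q1 * (a^2 + a * b + b^2) + q2 * (a + b) + q3 = 0" using ab by simp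
  have "3 * q1 * a^2 + 2 * q2 * a + q3 = 0" using assms(2) by (simp add: fields cubic_deriv_def)
  with chord have "(b - a) * (q1 * (b + 2 * a) + q2) = 0" by algebra
  then have "q1 * (b + 2 * a) + q2 = 0" using ab by simp
  with sum have "q1 * (b - a) = 0" by algebra
  then have "q1 = 0" using ab by simp
  then show ?thesis using sum assms(1,2) by (simp add: fields cubic_eval_def cubic_deriv_def)
qed

lemma pencil_has_double_root_if_wronskian_eq_0:
  assumes "cubic_wronskian f p t = 0"
    and "cubic_eval p t \<noteq> 0 \<or> cubic_deriv p t \<noteq> 0"
  shows "\<exists>s. cubic_disc (cadd f (cscale s p)) = 0"
proof -
  define s where "s = (if cubic_eval p t \<noteq> 0 then - cubic_eval f t / cubic_eval p t
                       else - cubic_deriv f t / cubic_deriv p t)"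
  have "cubic_eval f t + s * cubic_eval p t = 0 \<and> cubic_deriv f t + s * cubic_deriv p t = 0"
    using assms by (auto simp: cubic_wronskian_def s_def field_simps)
  then show ?thesis
    by (auto simp: cubic_eval_cadd_cscale cubic_deriv_cadd_cscale
             intro!: exI[of _ s] cubic_disc_eq_0_if_double_root)
qed

lemma poly_pos_root_if_lead_coeff_const_opposite:
  fixes p :: "real poly"
  assumes "lead_coeff p * poly p 0 < 0"
  shows "\<exists>t>0. poly p t = 0"
proof -
  have root: "\<exists>t>0. poly q t = 0" if lc: "lead_coeff q > 0" and q0: "poly q 0 < 0"
    for q :: "real poly"
  proof -
    obtain n where "\<forall>x\<ge>n. lead_coeff q \<le> poly q x"
      using poly_pinfty_gt_lc[OF lc] by blast
    then have "poly q (max n 1) > 0"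
      using lc by (meson max.cobounded1 less_le_trans)
    moreover have "max n 1 > 0" by simp
    ultimately show ?thesis
      using poly_IVT[of 0 "max n 1" q] q0 by (auto simp: mult_neg_pos)
  qed
  show ?thesis
  proof (cases "lead_coeff p > 0")
    case True
    then show ?thesis using root[of p] assms by (simp add: mult_less_0_iff)
  next
    case False
    then show ?thesis using root[of "- p"] assms by (auto simp: mult_less_0_iff)
  qed
qed

lemma poly_neg_root_if_lead_coeff_const_opposite:
  fixes p :: "real poly"
  assumes "even (degree p)" and "lead_coeff p * poly p 0 < 0"
  shows "\<exists>t<0. poly p t = 0"
proof -
  let ?r = "pcompose p [:0, -1:]"
  have "lead_coeff ?r = lead_coeff p"
    using assms(1) by (simp add: lead_coeff_comp)
  then have "lead_coeff ?r * poly ?r 0 < 0"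
    using assms(2) by (simp add: poly_pcompose)
  then obtain t where "t > 0" "poly ?r t = 0"
    using poly_pos_root_if_lead_coeff_const_opposite by blast
  then show ?thesis
    by (intro exI[of _ "- t"]) (simp add: poly_pcompose)
qed

lemma cubic_wronskian_roots_of_both_signs:
  fixes l1 l2 l3 :: real
  assumes "l2 \<noteq> 0"
  obtains t0 t1 where "t1 < 0" "0 < t0"
    and "cubic_wronskian (1/3, 0, -1, 0) (l1, l2, l3, l2) t0 = 0"
    and "cubic_wronskian (1/3, 0, -1, 0) (l1, l2, l3, l2) t1 = 0"
proof -
  define w where "w = [:l2, 0, -2 * l2, -(2/3 * l3 + 2 * l1), -l2/3:]"
  have wronskian: "cubic_wronskian (1/3, 0, -1, 0) (l1, l2, l3, l2) t = poly w t" for t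
    by (simp add: w_def cubic_wronskian_def cubic_eval_def cubic_deriv_def
                  power2_eq_square power3_eq_cube algebra_simps)
  have "degree w = 4" "lead_coeff w * poly w 0 < 0"
    using assms by (auto simp: w_def zero_less_mult_iff)
  then show ?thesis
    using that poly_pos_root_if_lead_coeff_const_opposite poly_neg_root_if_lead_coeff_const_opposite
    unfolding wronskian by (metis even_numeral)
qed

theorem lemma4p10:
  fixes l1 l2 l3 :: real
  assumes "(l1, l2, l3, l2) \<noteq> ((0, 0, 0, 0) :: bcubic)"
  shows "\<exists>s::real. cubic_disc (cadd (1/3, 0, -1, 0) (cscale s (l1, l2, l3, l2))) = 0"
proof (cases "l2 = 0")
  case True
  then have "l1 \<noteq> 0 \<or> l3 \<noteq> 0" using assms by auto
  then show ?thesis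
  proof
    assume "l1 \<noteq> 0"
    then show ?thesis
      using True by (intro exI[of _ "-1 / (3 * l1)"]) (simp add: cubic_disc_def cadd_def cscale_def)
  next
    assume "l3 \<noteq> 0"
    then show ?thesis
      using True by (intro exI[of _ "1 / l3"]) (simp add: cubic_disc_def cadd_def cscale_def)
  qed
next
  case False
  let ?p = "(l1, l2, l3, l2) :: bcubic"
  obtain t0 t1 where "t1 < 0" "0 < t0"
    and "cubic_wronskian (1/3, 0, -1, 0) ?p t0 = 0" "cubic_wronskian (1/3, 0, -1, 0) ?p t1 = 0"
    using cubic_wronskian_roots_of_both_signs[OF False] .
  moreover have "\<not> (cubic_eval ?p t0 = 0 \<and> cubic_deriv ?p t0 = 0 \<and>
                   cubic_eval ?p t1 = 0 \<and> cubic_deriv ?p t1 = 0)"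
    using cubic_eq_0_if_two_double_roots[of ?p t0 t1] assms \<open>t1 < 0\<close> \<open>0 < t0\<close>
    by auto
  ultimately show ?thesis
    using pencil_has_double_root_if_wronskian_eq_0 by metis
qed

end
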